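(* Let $\rho>3$ be an odd prime. Then $\mathrm{ord}_{4\rho}(3)=\rho-1$ if and only if one of the following holds: (1) $\rho\equiv \pm 5\pmod{12}$ and $\mathrm{ord}_\rho(3)=\rho-1$; (2) $\rho\equiv -1\pmod{12}$ and $\mathrm{ord}_\rho(3)=\frac{\rho-1}{2}$.
   Context: $\mathrm{ord}_M(a)$ denotes the multiplicative order of $a$ modulo $M$. *)

theory Defs
  imports "HOL-Number_Theory.Number_Theory"
begin

end

theory Submission imports Defs begin

text \<open>
  Since 4 and \<open>\<rho>\<close> are coprime and \<open>ord 4 3 = 2\<close>, the order of 3 modulo \<open>4\<rho>\<close> is
  \<open>lcm 2 d\<close> with \<open>d = ord \<rho> 3\<close>; as \<open>d\<close> divides the even number \<open>\<rho> - 1\<close>, this equals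
  \<open>\<rho> - 1\<close> iff \<open>d = \<rho> - 1\<close>, or \<open>d = (\<rho> - 1)/2\<close> is odd, i.e. \<open>\<rho> \<equiv> 3 (mod 4)\<close>.
  By Euler's criterion 3 is a quadratic residue modulo \<open>\<rho>\<close> iff \<open>d\<close> divides \<open>(\<rho> - 1)/2\<close>,
  and by quadratic reciprocity this happens iff \<open>\<rho> \<equiv> \<plusminus>1 (mod 12)\<close>.
\<close>

lemma prime_mod_12_cases:
  fixes p :: nat
  assumes "prime p" "p > 3"
  shows "p mod 12 = 1 \<or> p mod 12 = 5 \<or> p mod 12 = 7 \<or> p mod 12 = 11"
proof -
  have "\<not> 2 dvd p" "\<not> 3 dvd p"
    using assms by (auto simp: prime_nat_iff)
  then show ?thesis by presburger
qed

lemma even_half_pred_iff: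
  fixes n :: nat
  assumes "odd n"
  shows "even ((n - 1) div 2) \<longleftrightarrow> n mod 4 = 1"
  using assms by presburger

lemma QuadRes_3_iff: "QuadRes 3 a \<longleftrightarrow> a mod 3 \<noteq> 2"
proof
  assume "QuadRes 3 a"
  then obtain y :: int where "y\<^sup>2 mod 3 = a mod 3"
    by (auto simp: QuadRes_def cong_def)
  moreover have "y\<^sup>2 mod 3 = (y mod 3)\<^sup>2 mod 3"
    by (simp add: power_mod)
  moreover have "y mod 3 = 0 \<or> y mod 3 = 1 \<or> y mod 3 = 2"
    by presburger
  ultimately show "a mod 3 \<noteq> 2"
    by (auto simp: power2_eq_square)
next
  assume "a mod 3 \<noteq> 2"
  then have "a mod 3 = 0 \<or> a mod 3 = 1"
    by presburger
  then have "[(a mod 3)\<^sup>2 = a] (mod 3)"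
    by (auto simp: cong_def)
  then show "QuadRes 3 a"
    unfolding QuadRes_def by blast
qed

lemma Legendre_mod_3:
  "Legendre a 3 = (if a mod 3 = 0 then 0 else if a mod 3 = 1 then 1 else -1)"
  by (auto simp: Legendre_def QuadRes_3_iff cong_def)

lemma Legendre_3_eq_1_iff:
  fixes p :: nat
  assumes "prime p" "p > 3"
  shows "Legendre 3 (int p) = 1 \<longleftrightarrow> p mod 12 = 1 \<or> p mod 12 = 11"
proof -
  have mod_3: "p mod 3 = p mod 12 mod 3" and mod_4: "p mod 4 = p mod 12 mod 4"
    by (simp_all add: mod_mod_cancel)
  note mod_12 = prime_mod_12_cases[OF assms]
  have "int p mod 3 = int (p mod 3)"
    by (simp add: of_nat_mod)
  moreover have "p mod 3 = 1 \<or> p mod 3 = 2"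
    using mod_12 mod_3 by auto
  ultimately have Legendre_p_3: "Legendre (int p) 3 = (if p mod 3 = 1 then 1 else -1)"
    unfolding Legendre_mod_3 by auto
  have "odd p"
    using assms prime_odd_nat by auto
  then have sign: "(-1::int) ^ ((p - 1) div 2) = (if p mod 4 = 1 then 1 else -1)"
    using even_half_pred_iff by (simp add: minus_one_power_iff)
  have reciprocity: "Legendre (int p) 3 * Legendre 3 (int p) = (-1) ^ ((p - 1) div 2)"
    using Quadratic_Reciprocity[of p 3] assms by simp
  have "Legendre 3 (int p) = Legendre (int p) 3 * (Legendre (int p) 3 * Legendre 3 (int p))"
    by (simp add: Legendre_p_3)
  also have "\<dots> = Legendre (int p) 3 * (-1) ^ ((p - 1) div 2)"
    by (simp only: reciprocity)
  also have "\<dots> = (if p mod 3 = 1 \<longleftrightarrow> p mod 4 = 1 then 1 else -1)"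
    unfolding Legendre_p_3 sign by simp
  finally show ?thesis
    using mod_12 mod_3 mod_4 by auto
qed

lemma Legendre_eq_1_iff_ord_dvd:
  fixes p a :: nat
  assumes "prime p" "p > 2" "coprime p a"
  shows "Legendre (int a) (int p) = 1 \<longleftrightarrow> ord p a dvd (p - 1) div 2"
proof -
  let ?h = "(p - 1) div 2" and ?L = "Legendre (int a) (int p)"
  have "\<not> [int a = 0] (mod int p)"
    using assms by (metis cong_0_iff coprime_common_divisor int_dvd_int_iff not_prime_unit dvd_refl)
  then have "?L = 1 \<or> ?L = -1"
    by (auto simp: Legendre_def)
  moreover have "\<not> [-1 = 1] (mod int p)"
    using assms by (auto simp: cong_iff_dvd_diff dest: zdvd_imp_le)
  ultimately have "?L = 1 \<longleftrightarrow> [?L = 1] (mod int p)"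
    by auto
  also have "\<dots> \<longleftrightarrow> [int a ^ ?h = 1] (mod int p)"
    using euler_criterion[of p "int a"] assms by (metis cong_sym cong_trans)
  also have "\<dots> \<longleftrightarrow> [a ^ ?h = 1] (mod p)"
    by (metis cong_int_iff of_nat_1 of_nat_power)
  also have "\<dots> \<longleftrightarrow> ord p a dvd ?h"
    by (rule ord_divides)
  finally show ?thesis .
qed

lemma lcm_2_eq_even_iff:
  fixes d n :: nat
  assumes "even n"
  shows "lcm 2 d = n \<longleftrightarrow> d = n \<or> odd d \<and> 2 * d = n"
proof (cases "even d")
  case True
  then have "lcm 2 d = d"
    by (simp add: lcm_proj2_if_dvd)
  then show ?thesis
    using True by auto
next
  case False
  then have "lcm 2 d = 2 * d"
    by (simp add: lcm_coprime)
  then show ?thesis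
    using False assms by auto
qed

theorem lemma9:
  fixes \<rho> :: nat
  assumes "prime \<rho>" and "odd \<rho>" and "\<rho> > 3"
  shows "ord (4 * \<rho>) 3 = \<rho> - 1 \<longleftrightarrow>
           (([\<rho> = 5] (mod 12) \<or> [\<rho> = 7] (mod 12)) \<and> ord \<rho> 3 = \<rho> - 1)
         \<or> ([\<rho> = 11] (mod 12) \<and> ord \<rho> 3 = (\<rho> - 1) div 2)"
proof -
  let ?d = "ord \<rho> 3" and ?h = "(\<rho> - 1) div 2"
  have "coprime 4 \<rho>"
    using \<open>odd \<rho>\<close> coprime_power_left_iff[of 2 2 \<rho>] by simp
  then have "ord (4 * \<rho>) 3 = lcm 2 ?d"
    by (simp add: ord_modulus_mult_coprime)
  then have order: "ord (4 * \<rho>) 3 = \<rho> - 1 \<longleftrightarrow> ?d = \<rho> - 1 \<or> odd ?d \<and> ?d = ?h"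
    using \<open>odd \<rho>\<close> by (auto simp: lcm_2_eq_even_iff)
  have "coprime \<rho> 3"
    using assms by (meson prime_nat_iff'' zero_less_numeral)
  then have residue: "\<rho> mod 12 = 1 \<or> \<rho> mod 12 = 11 \<longleftrightarrow> ?d dvd ?h"
    using assms Legendre_eq_1_iff_ord_dvd[of \<rho> 3] Legendre_3_eq_1_iff[of \<rho>] by simp
  have "\<not> \<rho> - 1 dvd ?h"
    using assms by (auto dest: dvd_imp_le)
  with residue have "?d = \<rho> - 1 \<Longrightarrow> \<rho> mod 12 = 5 \<or> \<rho> mod 12 = 7"
    using prime_mod_12_cases[OF \<open>prime \<rho>\<close> \<open>\<rho> > 3\<close>] by auto
  moreover from residue have "?d = ?h \<Longrightarrow> \<rho> mod 12 = 1 \<or> \<rho> mod 12 = 11"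
    by auto
  moreover have "odd ?h \<longleftrightarrow> \<rho> mod 12 = 7 \<or> \<rho> mod 12 = 11"
    using even_half_pred_iff[OF \<open>odd \<rho>\<close>] prime_mod_12_cases[OF \<open>prime \<rho>\<close> \<open>\<rho> > 3\<close>]
    by (auto simp: mod_mod_cancel[of 4 12 \<rho>, symmetric])
  ultimately show ?thesis
    unfolding order cong_def by auto
qed

end
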